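(* Let $p>1$. For $\beta>-1$, $\beta\ne0$, let $\eta_1(\beta)\in(0,1)$ be the root of $\eta^\beta=\dfrac{1}{1+\beta(\eta+1)}$ and $$\psi_0(\beta,\eta)=\dfrac{(1+\eta^{\beta+1})^{1/\beta}}{(1+\eta)^{(\beta+1)/\beta}}+\dfrac{(\beta+1)^{(\beta+1)/\beta}}{\beta}\left[\dfrac1{1+\eta^{\beta+1}}-\dfrac1{1+\eta}\right].$$ Then $$\max_{0\le\eta\le\eta_1(1/(p-1))}\psi_0\!\left(\frac1{p-1},\eta\right)=\max_{0\le\eta\le\eta_1(-1/p)}\psi_0\!\left(-\frac1p,\eta\right).$$ *)

theory Defs
  imports Complex_Main
begin

definition eta1 :: "real \<Rightarrow> real" where
  "eta1 \<beta> = (THE \<eta>. 0 < \<eta> \<and> \<eta> < 1 \<and>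
                  \<eta> powr \<beta> = 1 / (1 + \<beta> * (\<eta> + 1)))"

definition psi0 :: "real \<Rightarrow> real \<Rightarrow> real" where
  "psi0 \<beta> \<eta> =
     (1 + \<eta> powr (\<beta> + 1)) powr (1 / \<beta>) / (1 + \<eta>) powr ((\<beta> + 1) / \<beta>)
     + (\<beta> + 1) powr ((\<beta> + 1) / \<beta>) / \<beta>
       * (1 / (1 + \<eta> powr (\<beta> + 1)) - 1 / (1 + \<eta>))"

end

theory Submission
  imports Defs
begin

text \<open>For \<open>b > 0\<close> the substitution \<open>\<beta> = -b/(b+1)\<close>, \<open>\<eta> = x\<^sup>b\<^sup>+\<^sup>1\<close> is a symmetry of the problem:
  it carries \<open>\<psi>\<^sub>0(b, x)\<close> to \<open>\<psi>\<^sub>0(\<beta>, \<eta>)\<close> and the root \<open>\<eta>\<^sub>1(b)\<close> to \<open>\<eta>\<^sub>1(\<beta>)\<close>, since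
  \<open>\<beta> + 1 = 1/(b+1)\<close> and \<open>(\<beta>+1)/\<beta> = -1/b\<close>. As \<open>x \<mapsto> x\<^sup>b\<^sup>+\<^sup>1\<close> maps \<open>[0, \<eta>\<^sub>1(b)]\<close> onto
  \<open>[0, \<eta>\<^sub>1(\<beta>)]\<close>, both sides are suprema of the same set of values. With \<open>b = 1/(p-1)\<close>
  one gets \<open>\<beta> = -1/p\<close>.\<close>

lemma powr_powr_inverse:
  fixes x a :: real
  assumes "a \<noteq> 0" "x \<ge> 0"
  shows "(x powr (1 / a)) powr a = x" and "(x powr a) powr (1 / a) = x"
  using assms by (simp_all add: powr_powr)

lemma powr_image_atLeastAtMost:
  fixes a l u :: real
  assumes a: "a > 0" and l: "l \<ge> 0" and u: "u \<ge> 0"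
  shows "(\<lambda>x. x powr a) ` {l..u} = {l powr a..u powr a}"
proof
  show "(\<lambda>x. x powr a) ` {l..u} \<subseteq> {l powr a..u powr a}"
    using a l by (force intro: powr_mono2)
next
  show "{l powr a..u powr a} \<subseteq> (\<lambda>x. x powr a) ` {l..u}"
  proof
    fix y assume y: "y \<in> {l powr a..u powr a}"
    then have "y \<ge> 0" using l by (auto intro: order.trans[of 0 "l powr a"])
    have "l \<le> y powr (1 / a)" "y powr (1 / a) \<le> u"
      using powr_mono2[of "1 / a" "l powr a" y] powr_mono2[of "1 / a" y "u powr a"] y a l u \<open>y \<ge> 0\<close>
      by (simp_all add: powr_powr_inverse)
    moreover have "(y powr (1 / a)) powr a = y" using a \<open>y \<ge> 0\<close> by (simp add: powr_powr_inverse)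
    ultimately show "y \<in> (\<lambda>x. x powr a) ` {l..u}" by force
  qed
qed

lemma psi0_dual:
  fixes b x :: real
  assumes b: "b > 0" and x: "x \<ge> 0"
  shows "psi0 (- b / (b + 1)) (x powr (b + 1)) = psi0 b x"
proof -
  define c where "c = b + 1"
  define \<beta> where "\<beta> = - b / c"
  have c: "c > 1" using b by (simp add: c_def)
  have expts: "\<beta> + 1 = 1 / c" "1 / \<beta> = - (c / b)" "(\<beta> + 1) / \<beta> = - (1 / b)"
    using b by (simp_all add: \<beta>_def c_def field_simps)
  have "(x powr c) powr (1 / c) = x" using x c by (simp add: powr_powr_inverse)
  moreover have "(1 / c) powr (- (1 / b)) = c powr (1 / b)"
    using c by (simp add: powr_minus_divide powr_divide)
  ultimately have "psi0 \<beta> (x powr c)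
     = (1 + x) powr (- (c / b)) / (1 + x powr c) powr (- (1 / b))
       + c powr (1 / b) / \<beta> * (1 / (1 + x) - 1 / (1 + x powr c))"
    \<comment> \<open>\<open>(\<beta> + 1) / \<beta>\<close> has to be rewritten before its subterm \<open>\<beta> + 1\<close>\<close>
    unfolding psi0_def unfolding expts(3) unfolding expts(2) expts(1) by (simp only:)
  also have "\<dots> = (1 + x powr c) powr (1 / b) / (1 + x) powr (c / b)
       + c powr (1 / b) * c / b * (1 / (1 + x powr c) - 1 / (1 + x))"
  proof -
    have "c powr (1 / b) / \<beta> = - (c powr (1 / b) * c / b)" using b c by (simp add: \<beta>_def)
    then show ?thesis by (simp add: powr_minus divide_inverse algebra_simps)
  qed
  also have "c powr (1 / b) * c = c powr (c / b)"
    using b c by (simp add: c_def add_divide_distrib powr_add)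
  finally show ?thesis unfolding psi0_def \<beta>_def c_def by simp
qed

definition eta1_root :: "real \<Rightarrow> real \<Rightarrow> bool" where
  "eta1_root \<beta> \<eta> \<longleftrightarrow> 0 < \<eta> \<and> \<eta> < 1 \<and> \<eta> powr \<beta> = 1 / (1 + \<beta> * (\<eta> + 1))"

lemma eta1_eq_The_root: "eta1 \<beta> = (THE \<eta>. eta1_root \<beta> \<eta>)"
  by (simp add: eta1_def eta1_root_def)

text \<open>\<open>\<eta>\<^sup>b (1 + b(\<eta>+1))\<close> increases from \<open>0\<close> to \<open>1 + 2b\<close> on \<open>[0, 1]\<close>.\<close>

lemma ex1_eta1_root:
  fixes b :: real
  assumes b: "b > 0"
  shows "\<exists>!\<eta>. eta1_root b \<eta>"
proof -
  define g where "g x = x powr b * (1 + b * (x + 1))" for x :: real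
  have root_iff: "eta1_root b x \<longleftrightarrow> 0 < x \<and> x < 1 \<and> g x = 1" for x
  proof -
    have "x > 0 \<Longrightarrow> 1 + b * (x + 1) > 0" using b by (simp add: add_pos_nonneg)
    then show ?thesis unfolding eta1_root_def g_def by (auto simp: field_simps)
  qed
  have g_strict_mono: "g x < g y" if "0 < x" "x < y" for x y
    unfolding g_def using that b
    by (intro mult_strict_mono powr_less_mono2) (auto simp: add_pos_nonneg)
  have "continuous_on {0..1} g"
    unfolding g_def using b by (intro continuous_intros continuous_on_powr') auto
  moreover have "g 0 \<le> 1" "1 \<le> g 1" using b by (simp_all add: g_def)
  ultimately obtain x where x: "0 \<le> x" "x \<le> 1" "g x = 1"
    using IVT'[of g 0 1 1] by auto
  moreover have "x \<noteq> 0" "x \<noteq> 1" using x b by (auto simp: g_def)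
  ultimately have "eta1_root b x" using root_iff by auto
  moreover have "y = x" if "eta1_root b y" for y
    using that \<open>eta1_root b x\<close> g_strict_mono unfolding root_iff
    by (metis linorder_neqE_linordered_idom order_less_irrefl)
  ultimately show ?thesis by blast
qed

lemma eta1_root_dual_iff:
  fixes b x :: real
  assumes b: "b > 0" and x: "x > 0"
  shows "eta1_root (- b / (b + 1)) (x powr (b + 1)) \<longleftrightarrow> eta1_root b x"
proof -
  define y where "y = x powr (b + 1)"
  have "x powr b > 0" "(b + 1) * x powr b > 0" "1 + b * (x + 1) > 0"
    using b x by (simp_all add: add_pos_nonneg)
  have "y > 0" and y_eq: "y = x powr b * x" using x by (simp_all add: y_def powr_add)
  have "y powr (- b / (b + 1)) = 1 / x powr b"
    using b x by (simp add: y_def powr_powr powr_minus_divide)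
  moreover have "1 / (1 + (- b / (b + 1)) * (y + 1)) = (b + 1) / (1 - b * y)"
    using b by (simp add: field_simps)
  moreover have "1 / x powr b = (b + 1) / (1 - b * y) \<longleftrightarrow> 1 - b * y = (b + 1) * x powr b"
    using \<open>x powr b > 0\<close> \<open>(b + 1) * x powr b > 0\<close> by (cases "1 - b * y = 0") (auto simp: field_simps)
  moreover have "x powr b = 1 / (1 + b * (x + 1)) \<longleftrightarrow> 1 - b * y = (b + 1) * x powr b"
    using \<open>1 + b * (x + 1) > 0\<close> unfolding y_eq by (auto simp: field_simps)
  moreover have "y < 1 \<longleftrightarrow> x < 1"
    using b x powr_less_mono2[of "b + 1" x 1] powr_less_cancel2[of "b + 1" x 1] by (auto simp: y_def)
  ultimately show ?thesis
    unfolding eta1_root_def y_def[symmetric] using x \<open>y > 0\<close> by auto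
qed

lemma eta1_root_eta1:
  fixes b :: real
  assumes "b > 0"
  shows "eta1_root b (eta1 b)"
  unfolding eta1_eq_The_root using ex1_eta1_root[OF assms] by (rule theI')

lemma eta1_dual:
  fixes b :: real
  assumes b: "b > 0"
  shows "eta1 (- b / (b + 1)) = eta1 b powr (b + 1)"
proof -
  note root = eta1_root_eta1[OF b]
  then have "eta1 b > 0" by (simp add: eta1_root_def)
  have "y = eta1 b powr (b + 1)" if "eta1_root (- b / (b + 1)) y" for y
  proof -
    have "y > 0" using that by (simp add: eta1_root_def)
    define x where "x = y powr (1 / (b + 1))"
    have y_eq: "y = x powr (b + 1)" using \<open>y > 0\<close> b by (simp add: x_def powr_powr_inverse)
    have "x > 0" using \<open>y > 0\<close> by (simp add: x_def)
    then have "eta1_root b x" using that b eta1_root_dual_iff unfolding y_eq by blast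
    then have "x = eta1 b" using root ex1_eta1_root[OF b] by blast
    then show ?thesis using y_eq by simp
  qed
  moreover have "eta1_root (- b / (b + 1)) (eta1 b powr (b + 1))"
    using eta1_root_dual_iff[OF b \<open>eta1 b > 0\<close>] root by blast
  ultimately show ?thesis unfolding eta1_eq_The_root by blast
qed

theorem corollary2p5:
  fixes p :: real
  assumes "p > 1"
  shows "Sup (psi0 (1 / (p - 1)) ` {0 .. eta1 (1 / (p - 1))})
       = Sup (psi0 (- 1 / p) ` {0 .. eta1 (- 1 / p)})"
proof -
  define b where "b = 1 / (p - 1)"
  have b: "b > 0" using assms by (simp add: b_def)
  have "- 1 / p = - b / (b + 1)" using assms by (simp add: b_def field_simps)
  moreover have "{0 .. eta1 (- b / (b + 1))} = (\<lambda>x. x powr (b + 1)) ` {0 .. eta1 b}"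
    using b eta1_root_eta1[OF b] unfolding eta1_dual[OF b]
    by (simp add: powr_image_atLeastAtMost eta1_root_def)
  ultimately have "psi0 (- 1 / p) ` {0 .. eta1 (- 1 / p)} = psi0 b ` {0 .. eta1 b}"
    using b psi0_dual by (simp add: image_image)
  then show ?thesis by (simp add: b_def)
qed

end
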